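(* For every $P\in\Delta_{BD}$ and every $\varepsilon>0$ there exists a finite partition $\{C_1,\dots,C_n\}$ of $\Omega$ such that each $C_i$ is a cylinder and $P(C_i)\le\varepsilon$ for each $i$.
   Context: Let $\Omega=\{0,1\}^{\mathbb N}$; $\omega^t$ is the cylinder of paths agreeing with $\omega$ in the first $t$ coordinates (cylinders have varying lengths). $\Sigma$ is a fixed $\sigma$-algebra containing all cylinders; $\mathbb P$ the finitely additive probabilities on $(\Omega,\Sigma)$. $P$ is strongly nonatomic if for every $E\in\Sigma$, $\alpha\in[0,1]$ there is $F\in\Sigma$, $F\subseteq E$, $P(F)=\alpha P(E)$. $R(E\mid\omega^t)=R(E\cap\omega^t)/R(\omega^t)$ when $R(\omega^t)>0$. $P$ merges with $Q$ if for every $\varepsilon>0$, $Q(\{\omega:\sup_{E\in\Sigma}|P(E\mid\omega^t)-Q(E\mid\omega^t)|>\varepsilon\})\to0$ as $t\to\infty$ (cylinders with $Q(\omega^t)>0=P(\omega^t)$ counted in the set). $Q\ll P$: $P(E_n)\to0$ implies $Q(E_n)\to0$ for every sequence in $\Sigma$. $\Delta_{BD}$ is the set of strongly nonatomic $P\in\mathbb P$ that merge with every $Q\in\mathbb P$ with $Q\ll P$. *)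

theory Defs
  imports "HOL-Analysis.Analysis"
begin

type_synonym path = "nat \<Rightarrow> bool"

definition cyl :: "path \<Rightarrow> nat \<Rightarrow> path set" where
  "cyl \<omega> t = {\<omega>'. \<forall>i<t. \<omega>' i = \<omega> i}"

definition is_cylinder :: "path set \<Rightarrow> bool" where
  "is_cylinder C \<longleftrightarrow> (\<exists>\<omega> t. C = cyl \<omega> t)"

text \<open>Finitely additive probability on (Omega, Sigma); values outside Sigma are irrelevant.\<close>
definition fa_prob :: "path set set \<Rightarrow> (path set \<Rightarrow> real) \<Rightarrow> bool" where
  "fa_prob \<Sigma> P \<longleftrightarrow>
     (\<forall>E\<in>\<Sigma>. 0 \<le> P E) \<and> P UNIV = 1 \<and>
     (\<forall>E\<in>\<Sigma>. \<forall>F\<in>\<Sigma>. E \<inter> F = {} \<longrightarrow> P (E \<union> F) = P E + P F)"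

definition strongly_nonatomic :: "path set set \<Rightarrow> (path set \<Rightarrow> real) \<Rightarrow> bool" where
  "strongly_nonatomic \<Sigma> P \<longleftrightarrow>
     (\<forall>E\<in>\<Sigma>. \<forall>\<alpha>::real. 0 \<le> \<alpha> \<and> \<alpha> \<le> 1 \<longrightarrow> (\<exists>F\<in>\<Sigma>. F \<subseteq> E \<and> P F = \<alpha> * P E))"

definition cond_prob :: "(path set \<Rightarrow> real) \<Rightarrow> path set \<Rightarrow> path \<Rightarrow> nat \<Rightarrow> real" where
  "cond_prob R E \<omega> t = R (E \<inter> cyl \<omega> t) / R (cyl \<omega> t)"

definition merges :: "path set set \<Rightarrow> (path set \<Rightarrow> real) \<Rightarrow> (path set \<Rightarrow> real) \<Rightarrow> bool" where
  "merges \<Sigma> P Q \<longleftrightarrow>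
     (\<forall>\<epsilon>>0. (\<lambda>t. Q {\<omega>. (0 < Q (cyl \<omega> t) \<and> P (cyl \<omega> t) = 0) \<or>
                         (0 < Q (cyl \<omega> t) \<and> 0 < P (cyl \<omega> t) \<and>
                          (SUP E\<in>\<Sigma>. \<bar>cond_prob P E \<omega> t - cond_prob Q E \<omega> t\<bar>) > \<epsilon>)})
             \<longlonglongrightarrow> 0)"

definition abs_cont :: "path set set \<Rightarrow> (path set \<Rightarrow> real) \<Rightarrow> (path set \<Rightarrow> real) \<Rightarrow> bool" where
  "abs_cont \<Sigma> Q P \<longleftrightarrow>
     (\<forall>En::nat \<Rightarrow> path set. (\<forall>n. En n \<in> \<Sigma>) \<longrightarrow>
        (\<lambda>n. P (En n)) \<longlonglongrightarrow> 0 \<longrightarrow> (\<lambda>n. Q (En n)) \<longlonglongrightarrow> 0)"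

definition Delta_BD :: "path set set \<Rightarrow> (path set \<Rightarrow> real) set" where
  "Delta_BD \<Sigma> = {P. fa_prob \<Sigma> P \<and> strongly_nonatomic \<Sigma> P \<and>
      (\<forall>Q. fa_prob \<Sigma> Q \<and> abs_cont \<Sigma> Q P \<longrightarrow> merges \<Sigma> P Q)}"

end

theory Submission
  imports Defs
begin

text \<open>
  If Omega has no finite partition into cylinders of
  P-mass at most eps, then splitting cylinders in two and following an unpartitionable
  half (Koenig's lemma) yields a path omega all of whose cylinders omega^t have mass
  above eps. Along such a heavy path the limits mu(E) = lim_t P(E \<inter> omega^t) form a
  finitely additive measure below P with mu(Omega) > 0. Strong nonatomicity splits some
  omega^t into two halves, one of which, F, satisfies 0 < mu(F) < mu(Omega). The
  normalised trace Q(E) = mu(E \<inter> F) / mu(F) is a finitely additive probability with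
  Q << P, concentrated on every omega^t and giving conditional probability 1 to F, while
  P(F | omega^t) tends to mu(F) / mu(Omega) < 1. Hence P does not merge with Q,
  contradicting P \<in> Delta_BD.
\<close>

lemma fa_prob_nonneg: "fa_prob \<Sigma> R \<Longrightarrow> E \<in> \<Sigma> \<Longrightarrow> 0 \<le> R E"
  unfolding fa_prob_def by blast

lemma fa_prob_add:
  "fa_prob \<Sigma> R \<Longrightarrow> E \<in> \<Sigma> \<Longrightarrow> F \<in> \<Sigma> \<Longrightarrow> E \<inter> F = {} \<Longrightarrow> R (E \<union> F) = R E + R F"
  unfolding fa_prob_def by blast

lemma fa_prob_diff:
  assumes "fa_prob \<Sigma> R" "algebra UNIV \<Sigma>" "E \<in> \<Sigma>" "F \<in> \<Sigma>" "E \<subseteq> F"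
  shows "R (F - E) = R F - R E"
proof -
  interpret algebra UNIV \<Sigma> by fact
  have "R (E \<union> (F - E)) = R E + R (F - E)"
    using assms by (intro fa_prob_add) auto
  moreover have "E \<union> (F - E) = F" using assms(5) by blast
  ultimately show ?thesis by simp
qed

lemma fa_prob_mono:
  assumes "fa_prob \<Sigma> R" "algebra UNIV \<Sigma>" "E \<in> \<Sigma>" "F \<in> \<Sigma>" "E \<subseteq> F"
  shows "R E \<le> R F"
proof -
  interpret algebra UNIV \<Sigma> by fact
  have "0 \<le> R (F - E)" using assms by (intro fa_prob_nonneg) auto
  then show ?thesis using fa_prob_diff[OF assms] by simp
qed

text \<open>Conditional probabilities given a non-null cylinder lie in [0,1]; this bounds the
  supremum occurring in the definition of merging.\<close>
lemma cond_prob_bounds: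
  assumes "fa_prob \<Sigma> R" "algebra UNIV \<Sigma>" "E \<in> \<Sigma>" "cyl \<omega> t \<in> \<Sigma>" "0 < R (cyl \<omega> t)"
  shows "0 \<le> cond_prob R E \<omega> t" "cond_prob R E \<omega> t \<le> 1"
proof -
  interpret algebra UNIV \<Sigma> by fact
  have "0 \<le> R (E \<inter> cyl \<omega> t)" "R (E \<inter> cyl \<omega> t) \<le> R (cyl \<omega> t)"
    using assms by (auto intro: fa_prob_nonneg fa_prob_mono)
  then show "0 \<le> cond_prob R E \<omega> t" "cond_prob R E \<omega> t \<le> 1"
    using assms(5) unfolding cond_prob_def by auto
qed

lemma cyl_0 [simp]: "cyl \<omega> 0 = UNIV"
  unfolding cyl_def by auto

lemma cyl_antimono: "t \<le> s \<Longrightarrow> cyl \<omega> s \<subseteq> cyl \<omega> t"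
  unfolding cyl_def by auto

lemma cyl_eq: "\<omega>' \<in> cyl \<omega> t \<Longrightarrow> cyl \<omega>' t = cyl \<omega> t"
  unfolding cyl_def by auto

lemma cyl_split:
  "cyl \<omega> t = cyl (fun_upd \<omega> t True) (Suc t) \<union> cyl (fun_upd \<omega> t False) (Suc t)"
  "disjnt (cyl (fun_upd \<omega> t True) (Suc t)) (cyl (fun_upd \<omega> t False) (Suc t))"
  unfolding cyl_def disjnt_def by (auto simp: less_Suc_eq)

lemma cyl_nested_limit:
  assumes nested: "\<And>n. f (Suc n) \<in> cyl (f n) n"
  shows "cyl (f t) t = cyl (\<lambda>i. f (Suc i) i) t"
proof -
  have below: "f t \<in> cyl (f s) s" if "s \<le> t" for s t
    using that
  proof (induction t rule: dec_induct)
    case base then show ?case by (simp add: cyl_def)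
  next
    case (step t)
    then show ?case using nested[of t] unfolding cyl_def by auto
  qed
  have "f t i = f (Suc i) i" if "i < t" for i
    using below[of "Suc i" t] that unfolding cyl_def by auto
  then show ?thesis unfolding cyl_def by auto
qed

definition fine_cylinder_partition :: "(path set \<Rightarrow> real) \<Rightarrow> real \<Rightarrow> path set \<Rightarrow> path set set \<Rightarrow> bool" where
  "fine_cylinder_partition P \<epsilon> X Cs \<longleftrightarrow> finite Cs \<and> \<Union>Cs = X \<and> pairwise disjnt Cs \<and>
     (\<forall>C\<in>Cs. is_cylinder C \<and> P C \<le> \<epsilon>)"

lemma fine_cylinder_partition_single:
  "P (cyl \<omega> t) \<le> \<epsilon> \<Longrightarrow> fine_cylinder_partition P \<epsilon> (cyl \<omega> t) {cyl \<omega> t}"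
  unfolding fine_cylinder_partition_def is_cylinder_def by auto

lemma fine_cylinder_partition_union:
  assumes "fine_cylinder_partition P \<epsilon> A As" "fine_cylinder_partition P \<epsilon> B Bs" "disjnt A B"
  shows "fine_cylinder_partition P \<epsilon> (A \<union> B) (As \<union> Bs)"
proof -
  have As: "\<Union>As = A" "pairwise disjnt As" and Bs: "\<Union>Bs = B" "pairwise disjnt Bs"
    using assms(1,2) unfolding fine_cylinder_partition_def by auto
  have "disjnt X Y" if "X \<in> As" "Y \<in> Bs" for X Y
    using assms(3) As(1) Bs(1) that by (metis Union_upper disjnt_subset1 disjnt_subset2)
  then have "pairwise disjnt (As \<union> Bs)"
    using As(2) Bs(2) unfolding pairwise_def by (metis Un_iff disjnt_sym)
  then show ?thesis using assms(1,2) unfolding fine_cylinder_partition_def by auto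
qed

text \<open>Koenig-type argument: if Omega has no fine cylinder partition, one of the two children
  of every unpartitionable cylinder is again unpartitionable; dependent choice gives a
  path all of whose cylinders are unpartitionable, hence heavier than eps.\<close>
lemma heavy_path_if_no_partition:
  assumes "\<nexists>Cs. fine_cylinder_partition P \<epsilon> UNIV Cs"
  shows "\<exists>\<omega>. \<forall>t. \<epsilon> < P (cyl \<omega> t)"
proof -
  define heavy where "heavy n f \<longleftrightarrow> (\<nexists>Cs. fine_cylinder_partition P \<epsilon> (cyl f n) Cs)" for n f
  have "\<exists>f. \<forall>n. heavy n (f n) \<and> f (Suc n) \<in> cyl (f n) n"
  proof (rule dependent_nat_choice)
    show "\<exists>f. heavy 0 f" using assms by (simp add: heavy_def)
  next
    fix f n assume heavy_f: "heavy n f"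
    have "\<exists>b. heavy (Suc n) (fun_upd f n b)"
    proof (rule ccontr)
      assume "\<nexists>b. heavy (Suc n) (fun_upd f n b)"
      then obtain As Bs where
        "fine_cylinder_partition P \<epsilon> (cyl (fun_upd f n True) (Suc n)) As"
        "fine_cylinder_partition P \<epsilon> (cyl (fun_upd f n False) (Suc n)) Bs"
        unfolding heavy_def by blast
      then have "fine_cylinder_partition P \<epsilon> (cyl f n) (As \<union> Bs)"
        unfolding cyl_split(1)[of f n] by (rule fine_cylinder_partition_union) (rule cyl_split(2))
      then show False using heavy_f unfolding heavy_def by blast
    qed
    then obtain b where "heavy (Suc n) (fun_upd f n b)" ..
    moreover have "fun_upd f n b \<in> cyl f n" by (simp add: cyl_def)
    ultimately show "\<exists>g. heavy (Suc n) g \<and> g \<in> cyl f n" by blast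
  qed
  then obtain f where f: "\<And>n. heavy n (f n)" "\<And>n. f (Suc n) \<in> cyl (f n) n" by blast
  have "heavy t (\<lambda>i. f (Suc i) i)" for t
    using f(1)[of t] unfolding heavy_def cyl_nested_limit[OF f(2)] .
  then have "\<epsilon> < P (cyl (\<lambda>i. f (Suc i) i) t)" for t
    using fine_cylinder_partition_single unfolding heavy_def by (meson not_le)
  then show ?thesis by blast
qed

text \<open>The trace of P along a sequence of events D: the limit of P(E \<inter> D s). For decreasing
  D it exists on the algebra and is a finitely additive measure below P.\<close>
definition trace_limit :: "(path set \<Rightarrow> real) \<Rightarrow> (nat \<Rightarrow> path set) \<Rightarrow> path set \<Rightarrow> real" where
  "trace_limit P D E = lim (\<lambda>s. P (E \<inter> D s))"

locale decreasing_trace =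
  fixes \<Sigma> :: "path set set" and P :: "path set \<Rightarrow> real" and D :: "nat \<Rightarrow> path set"
  assumes algebra: "algebra UNIV \<Sigma>" and fa: "fa_prob \<Sigma> P"
    and D_dec: "decseq D" and D_sets: "\<And>s. D s \<in> \<Sigma>"
begin

sublocale algebra UNIV \<Sigma> by (rule algebra)

abbreviation \<mu> :: "path set \<Rightarrow> real" where "\<mu> \<equiv> trace_limit P D"

text \<open>The defining sequence is decreasing and bounded below, so it converges from above.\<close>
lemma trace_limit_tendsto:
  assumes "E \<in> \<Sigma>"
  shows "(\<lambda>s. P (E \<inter> D s)) \<longlonglongrightarrow> \<mu> E" and "\<mu> E \<le> P (E \<inter> D s)"
proof -
  have "decseq (\<lambda>s. P (E \<inter> D s))"
    using D_dec assms D_sets unfolding decseq_def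
    by (auto intro!: fa_prob_mono[OF fa algebra])
  moreover have "\<forall>s. 0 \<le> P (E \<inter> D s)"
    using assms D_sets by (auto intro: fa_prob_nonneg[OF fa])
  ultimately obtain L where L: "(\<lambda>s. P (E \<inter> D s)) \<longlonglongrightarrow> L" "\<forall>s. L \<le> P (E \<inter> D s)"
    by (rule decseq_convergent)
  moreover from L(1) have "\<mu> E = L" unfolding trace_limit_def by (rule limI)
  ultimately show "(\<lambda>s. P (E \<inter> D s)) \<longlonglongrightarrow> \<mu> E" and "\<mu> E \<le> P (E \<inter> D s)" by simp_all
qed

lemma trace_limit_le: "E \<in> \<Sigma> \<Longrightarrow> \<mu> E \<le> P E"
  using trace_limit_tendsto(2)[of E 0] fa_prob_mono[OF fa algebra, of "E \<inter> D 0" E] D_sets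
  by fastforce

lemma trace_limit_nonneg:
  assumes "E \<in> \<Sigma>" shows "0 \<le> \<mu> E"
proof (rule LIMSEQ_le_const[OF trace_limit_tendsto(1)[OF assms]])
  show "\<exists>N. \<forall>s\<ge>N. 0 \<le> P (E \<inter> D s)"
    using assms D_sets by (auto intro: fa_prob_nonneg[OF fa])
qed

lemma trace_limit_add:
  assumes "E \<in> \<Sigma>" "F \<in> \<Sigma>" "E \<inter> F = {}"
  shows "\<mu> (E \<union> F) = \<mu> E + \<mu> F"
proof -
  have "P ((E \<union> F) \<inter> D s) = P (E \<inter> D s) + P (F \<inter> D s)" for s
  proof -
    have "(E \<union> F) \<inter> D s = (E \<inter> D s) \<union> (F \<inter> D s)" by blast
    moreover have "(E \<inter> D s) \<inter> (F \<inter> D s) = {}" using assms(3) by blast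
    ultimately show ?thesis using assms D_sets by (simp add: fa_prob_add[OF fa Int Int])
  qed
  then have "(\<lambda>s. P ((E \<union> F) \<inter> D s)) \<longlonglongrightarrow> \<mu> E + \<mu> F"
    using assms by (simp add: tendsto_add trace_limit_tendsto(1))
  moreover have "(\<lambda>s. P ((E \<union> F) \<inter> D s)) \<longlonglongrightarrow> \<mu> (E \<union> F)"
    using assms by (intro trace_limit_tendsto(1)) auto
  ultimately show ?thesis using LIMSEQ_unique by metis
qed

lemma trace_limit_tail:
  assumes "E \<in> \<Sigma>" "\<And>s. t \<le> s \<Longrightarrow> X \<inter> D s = E \<inter> D s"
  shows "\<mu> X = \<mu> E"
proof -
  have "\<forall>\<^sub>F s in sequentially. P (E \<inter> D s) = P (X \<inter> D s)"
    unfolding eventually_sequentially using assms(2) by metis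
  from Lim_transform_eventually[OF trace_limit_tendsto(1)[OF assms(1)] this]
  show ?thesis unfolding trace_limit_def by (rule limI)
qed

lemma trace_limit_total: "(\<lambda>s. P (D s)) \<longlonglongrightarrow> \<mu> UNIV"
  using trace_limit_tendsto(1)[of UNIV] by simp

lemma trace_limit_D: "\<mu> (D t) = \<mu> UNIV"
  using D_dec by (intro trace_limit_tail[of UNIV t]) (auto simp: decseq_def)

text \<open>For strongly nonatomic P the trace has a proper part: choose D t with
  P(D t) < 2 mu(Omega) and split it into two halves of equal P-mass; each half has
  trace below mu(Omega), and the two traces add up to mu(Omega).\<close>
lemma trace_limit_proper_part:
  assumes "strongly_nonatomic \<Sigma> P" "0 < \<mu> UNIV"
  shows "\<exists>F\<in>\<Sigma>. 0 < \<mu> F \<and> \<mu> F < \<mu> UNIV"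
proof -
  have "\<forall>\<^sub>F s in sequentially. P (D s) < 2 * \<mu> UNIV"
    using assms(2) by (intro order_tendstoD(2)[OF trace_limit_total]) auto
  then obtain t where t: "P (D t) < 2 * \<mu> UNIV" by (auto simp: eventually_sequentially)
  have "\<forall>\<alpha>::real. 0 \<le> \<alpha> \<and> \<alpha> \<le> 1 \<longrightarrow> (\<exists>F\<in>\<Sigma>. F \<subseteq> D t \<and> P F = \<alpha> * P (D t))"
    using assms(1) D_sets[of t] unfolding strongly_nonatomic_def by blast
  from this[rule_format, of "1/2"]
  obtain F where F: "F \<in> \<Sigma>" "F \<subseteq> D t" "P F = 1/2 * P (D t)" by auto
  define G where "G = D t - F"
  have G: "G \<in> \<Sigma>" "P G = 1/2 * P (D t)"
    using fa_prob_diff[OF fa algebra F(1) D_sets F(2)] F(1,3) D_sets unfolding G_def by auto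
  have "F \<union> G = D t" "F \<inter> G = {}" using F(2) unfolding G_def by auto
  then have "\<mu> F + \<mu> G = \<mu> UNIV"
    using trace_limit_add[OF F(1) G(1)] trace_limit_D[of t] by simp
  moreover have "\<mu> F < \<mu> UNIV" "\<mu> G < \<mu> UNIV"
    using trace_limit_le[OF F(1)] trace_limit_le[OF G(1)] F(3) G(2) t by simp_all
  ultimately have "0 < \<mu> F" "\<mu> F < \<mu> UNIV" by linarith+
  then show ?thesis using F(1) by blast
qed

lemma trace_conditional_tail:
  assumes "F \<in> \<Sigma>" "0 < \<mu> F" "D t \<inter> F \<subseteq> X"
  shows "\<mu> (X \<inter> F) / \<mu> F = 1"
proof -
  have "X \<inter> F \<inter> D s = F \<inter> D s" if "t \<le> s" for s
    using assms(3) D_dec that unfolding decseq_def by blast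
  then have "\<mu> (X \<inter> F) = \<mu> F" using assms(1) by (rule trace_limit_tail[rotated])
  then show ?thesis using assms(2) by simp
qed

lemma trace_conditional_fa_prob:
  assumes "F \<in> \<Sigma>" "0 < \<mu> F"
  shows "fa_prob \<Sigma> (\<lambda>E. \<mu> (E \<inter> F) / \<mu> F)"
  unfolding fa_prob_def
proof (intro conjI ballI impI)
  fix E assume "E \<in> \<Sigma>"
  then show "0 \<le> \<mu> (E \<inter> F) / \<mu> F" using assms by (simp add: trace_limit_nonneg Int)
next
  show "\<mu> (UNIV \<inter> F) / \<mu> F = 1" using assms(2) by simp
next
  fix E E' assume "E \<in> \<Sigma>" "E' \<in> \<Sigma>" "E \<inter> E' = {}"
  then have "\<mu> ((E \<inter> F) \<union> (E' \<inter> F)) = \<mu> (E \<inter> F) + \<mu> (E' \<inter> F)"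
    using assms(1) by (intro trace_limit_add) auto
  moreover have "(E \<union> E') \<inter> F = (E \<inter> F) \<union> (E' \<inter> F)" by blast
  ultimately show "\<mu> ((E \<union> E') \<inter> F) / \<mu> F = \<mu> (E \<inter> F) / \<mu> F + \<mu> (E' \<inter> F) / \<mu> F"
    by (simp add: add_divide_distrib)
qed

lemma trace_conditional_abs_cont:
  assumes "F \<in> \<Sigma>" "0 < \<mu> F"
  shows "abs_cont \<Sigma> (\<lambda>E. \<mu> (E \<inter> F) / \<mu> F) P"
  unfolding abs_cont_def
proof (intro allI impI)
  fix En :: "nat \<Rightarrow> path set"
  assume En: "\<forall>n. En n \<in> \<Sigma>" and P_null: "(\<lambda>n. P (En n)) \<longlonglongrightarrow> 0"
  have "0 \<le> \<mu> (En n \<inter> F) / \<mu> F" for n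
    using En assms by (simp add: trace_limit_nonneg Int)
  then have lower: "\<forall>\<^sub>F n in sequentially. 0 \<le> \<mu> (En n \<inter> F) / \<mu> F" by simp
  have "\<mu> (En n \<inter> F) / \<mu> F \<le> P (En n) / \<mu> F" for n
  proof -
    have "\<mu> (En n \<inter> F) \<le> P (En n \<inter> F)" using En assms(1) by (simp add: trace_limit_le Int)
    also have "\<dots> \<le> P (En n)" using En assms(1) by (intro fa_prob_mono[OF fa algebra]) auto
    finally show ?thesis using assms(2) by (simp add: divide_right_mono)
  qed
  then have upper: "\<forall>\<^sub>F n in sequentially. \<mu> (En n \<inter> F) / \<mu> F \<le> P (En n) / \<mu> F"
    by simp
  show "(\<lambda>n. \<mu> (En n \<inter> F) / \<mu> F) \<longlonglongrightarrow> 0"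
    using tendsto_sandwich[OF lower upper tendsto_const tendsto_divide_zero[OF P_null]] .
qed

end

text \<open>Criterion for failure of merging: if Q is concentrated on every cylinder of a path omega
  and on F along it, while P(F | omega^t) converges to l < 1, then for all large t every
  point of omega^t is bad with tolerance (1 - l)/2, so the bad sets have Q-mass 1.\<close>
lemma not_merges_if_conditionals_separate:
  assumes alg: "algebra UNIV \<Sigma>" and cyl_sets: "\<And>t. cyl \<omega> t \<in> \<Sigma>"
    and faP: "fa_prob \<Sigma> P" and faQ: "fa_prob \<Sigma> Q"
    and P_pos: "\<And>t. 0 < P (cyl \<omega> t)"
    and Q_conc: "\<And>t X. cyl \<omega> t \<subseteq> X \<Longrightarrow> Q X = 1"
    and F: "F \<in> \<Sigma>" "\<And>t. Q (F \<inter> cyl \<omega> t) = 1"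
    and P_cond: "(\<lambda>t. cond_prob P F \<omega> t) \<longlonglongrightarrow> l" "l < 1"
  shows "\<not> merges \<Sigma> P Q"
proof
  define \<delta> where "\<delta> = (1 - l) / 2"
  have \<delta>: "0 < \<delta>" "l + \<delta> < 1" using P_cond(2) unfolding \<delta>_def by (simp_all add: field_simps)
  define bad where "bad t = {\<omega>'. (0 < Q (cyl \<omega>' t) \<and> P (cyl \<omega>' t) = 0) \<or>
      (0 < Q (cyl \<omega>' t) \<and> 0 < P (cyl \<omega>' t) \<and>
       (SUP E\<in>\<Sigma>. \<bar>cond_prob P E \<omega>' t - cond_prob Q E \<omega>' t\<bar>) > \<delta>)}" for t
  assume "merges \<Sigma> P Q"
  then have bad_null: "(\<lambda>t. Q (bad t)) \<longlonglongrightarrow> 0"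
    unfolding merges_def bad_def using \<delta>(1) by blast
  have "\<forall>\<^sub>F t in sequentially. cond_prob P F \<omega> t < l + \<delta>"
    using \<delta>(1) by (intro order_tendstoD(2)[OF P_cond(1)]) simp
  then obtain t\<^sub>1 where t\<^sub>1: "\<And>t. t\<^sub>1 \<le> t \<Longrightarrow> cond_prob P F \<omega> t < l + \<delta>"
    by (auto simp: eventually_sequentially)
  have "cyl \<omega> t \<subseteq> bad t" if "t\<^sub>1 \<le> t" for t
  proof
    fix \<omega>' assume "\<omega>' \<in> cyl \<omega> t"
    then have same: "cyl \<omega>' t = cyl \<omega> t" by (rule cyl_eq)
    then have same_cond: "cond_prob R E \<omega>' t = cond_prob R E \<omega> t" for R E
      by (simp add: cond_prob_def)
    have Q_cyl: "Q (cyl \<omega> t) = 1" by (rule Q_conc[OF order_refl])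
    have "\<bar>cond_prob P E \<omega> t - cond_prob Q E \<omega> t\<bar> \<le> 1" if "E \<in> \<Sigma>" for E
      using cond_prob_bounds[OF faP alg that cyl_sets P_pos, of t]
        cond_prob_bounds[OF faQ alg that cyl_sets, of t] Q_cyl
      unfolding abs_le_iff by linarith
    then have bdd: "bdd_above ((\<lambda>E. \<bar>cond_prob P E \<omega> t - cond_prob Q E \<omega> t\<bar>) ` \<Sigma>)"
      by (rule bdd_aboveI2)
    have "cond_prob Q F \<omega> t = 1" using F(2) Q_cyl by (simp add: cond_prob_def)
    then have "\<delta> < \<bar>cond_prob P F \<omega> t - cond_prob Q F \<omega> t\<bar>"
      using t\<^sub>1[OF that] unfolding \<delta>_def by (auto simp: abs_if field_simps)
    also have "\<dots> \<le> (SUP E\<in>\<Sigma>. \<bar>cond_prob P E \<omega> t - cond_prob Q E \<omega> t\<bar>)"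
      by (rule cSUP_upper[OF F(1) bdd])
    finally show "\<omega>' \<in> bad t" unfolding bad_def mem_Collect_eq same same_cond using Q_cyl P_pos by simp
  qed
  then have "\<forall>\<^sub>F t in sequentially. Q (bad t) = 1"
    unfolding eventually_sequentially using Q_conc by blast
  from Lim_transform_eventually[OF bad_null this] show False
    by (simp add: LIMSEQ_const_iff)
qed

lemma decreasing_trace_cyl:
  "algebra UNIV \<Sigma> \<Longrightarrow> fa_prob \<Sigma> P \<Longrightarrow> (\<And>t. cyl \<omega> t \<in> \<Sigma>) \<Longrightarrow> decreasing_trace \<Sigma> P (cyl \<omega>)"
  unfolding decreasing_trace_def decseq_def using cyl_antimono by blast

text \<open>The core of the theorem: no P in Delta_BD has a path whose cylinders all have mass
  at least eps > 0; the normalised trace on a proper part is a measure P fails to merge with.\<close>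
lemma Delta_BD_no_heavy_path:
  assumes alg: "algebra UNIV \<Sigma>" and cyl_sets: "\<And>t. cyl \<omega> t \<in> \<Sigma>"
    and P: "P \<in> Delta_BD \<Sigma>" and \<epsilon>: "0 < \<epsilon>" and heavy: "\<And>t. \<epsilon> \<le> P (cyl \<omega> t)"
  shows False
proof -
  have fa: "fa_prob \<Sigma> P" and sn: "strongly_nonatomic \<Sigma> P"
    and merging: "\<And>Q. fa_prob \<Sigma> Q \<Longrightarrow> abs_cont \<Sigma> Q P \<Longrightarrow> merges \<Sigma> P Q"
    using P unfolding Delta_BD_def by auto
  interpret decreasing_trace \<Sigma> P "cyl \<omega>" using decreasing_trace_cyl[OF alg fa cyl_sets] .
  have "\<epsilon> \<le> \<mu> UNIV" using heavy by (intro LIMSEQ_le_const[OF trace_limit_total]) auto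
  then obtain F where F: "F \<in> \<Sigma>" "0 < \<mu> F" "\<mu> F < \<mu> UNIV"
    using trace_limit_proper_part[OF sn] \<epsilon> by auto
  define Q where "Q E = \<mu> (E \<inter> F) / \<mu> F" for E
  have faQ: "fa_prob \<Sigma> Q" unfolding Q_def using trace_conditional_fa_prob[OF F(1,2)] .
  have "merges \<Sigma> P Q"
    using merging[OF faQ] trace_conditional_abs_cont[OF F(1,2)] unfolding Q_def by simp
  moreover have "\<not> merges \<Sigma> P Q"
  proof (rule not_merges_if_conditionals_separate[OF alg cyl_sets fa faQ _ _ F(1)])
    show "0 < P (cyl \<omega> t)" for t using heavy \<epsilon> by (meson less_le_trans)
    show "Q X = 1" if "cyl \<omega> t \<subseteq> X" for t X
      unfolding Q_def using that F by (intro trace_conditional_tail) auto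
    show "Q (F \<inter> cyl \<omega> t) = 1" for t
      unfolding Q_def using F by (intro trace_conditional_tail) auto
    show "(\<lambda>t. cond_prob P F \<omega> t) \<longlonglongrightarrow> \<mu> F / \<mu> UNIV"
      unfolding cond_prob_def using F \<open>\<epsilon> \<le> \<mu> UNIV\<close> \<epsilon>
      by (intro tendsto_divide trace_limit_tendsto(1) trace_limit_total) auto
    show "\<mu> F / \<mu> UNIV < 1" using F by simp
  qed
  ultimately show False by contradiction
qed

theorem theorem9:
  fixes \<Sigma> :: "path set set" and P :: "path set \<Rightarrow> real" and \<epsilon> :: real
  assumes "sigma_algebra UNIV \<Sigma>"
    and "\<And>\<omega> t. cyl \<omega> t \<in> \<Sigma>"
    and "P \<in> Delta_BD \<Sigma>"
    and "\<epsilon> > 0"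
  shows "\<exists>Cs. finite Cs \<and> \<Union>Cs = UNIV \<and> pairwise disjnt Cs \<and>
             (\<forall>C\<in>Cs. is_cylinder C \<and> P C \<le> \<epsilon>)"
proof (rule ccontr)
  assume "\<not> ?thesis"
  then have "\<nexists>Cs. fine_cylinder_partition P \<epsilon> UNIV Cs"
    unfolding fine_cylinder_partition_def .
  then obtain \<omega> where "\<And>t. \<epsilon> < P (cyl \<omega> t)"
    using heavy_path_if_no_partition by blast
  moreover have "algebra UNIV \<Sigma>"
    using assms(1) by (simp add: sigma_algebra_iff)
  ultimately show False
    using Delta_BD_no_heavy_path[OF _ assms(2,3,4)] by (meson less_imp_le)
qed

end
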